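(* Let $(\eta_k)_{k\in\mathbb N}$ be i.i.d. real random variables with $\mathbb{E}\eta_1=0$ and $\mathbb{E}\eta_1^2=1$, and let $\alpha>-1/2$. Then $$\lim_{s\to0+}f_\alpha(s)\sum_{k=2}^{M(s)}\frac{(\log k)^\alpha}{k^{1/2+s}}\eta_k=0\quad\text{a.s.}$$
   Context: $M(s)=\lfloor 1/s\rfloor$ for $s>0$; $c_\alpha=\Gamma(1+2\alpha)/2^{2\alpha}$; and $f_\alpha(s)=\big(s^{1+2\alpha}/(c_\alpha\log\log(1/s))\big)^{1/2}$ for $s\in(0,1/e)$. *)

theory Defs
  imports "HOL-Probability.Probability"
begin

definition Mfl :: "real \<Rightarrow> nat" where
  "Mfl s = nat \<lfloor>1 / s\<rfloor>"

definition c_alpha :: "real \<Rightarrow> real" where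
  "c_alpha \<alpha> = Gamma (1 + 2 * \<alpha>) / 2 powr (2 * \<alpha>)"

definition f_alpha :: "real \<Rightarrow> real \<Rightarrow> real" where
  "f_alpha \<alpha> s = sqrt (s powr (1 + 2 * \<alpha>) / (c_alpha \<alpha> * ln (ln (1 / s))))"

end

theory Submission
  imports Defs "HOL-Real_Asymp.Real_Asymp"
begin

text \<open>Put \<open>w k = (ln k) powr \<alpha> / sqrt k\<close> for \<open>k \<ge> 2\<close>. The variables \<open>w k * \<eta> k\<close> are
  orthogonal, and \<open>\<Sum>k<n. (w k)^2\<close> grows slower than any power of \<open>n\<close>. A Rademacher--Menshov
  chaining bound for the maximal partial sum over dyadic blocks, combined with Borel--Cantelli,
  shows that almost surely \<open>\<bar>\<Sum>k<j. w k * \<eta> k\<bar> = O(n powr q)\<close> uniformly in \<open>j \<le> n\<close>, where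
  \<open>q = (1/2 + \<alpha>) / 2\<close>. Since \<open>M(s) \<le> 1/s\<close> and \<open>k powr (-s)\<close> decreases in \<open>k\<close>, summation by
  parts bounds the sum in the theorem by \<open>O(s powr (-q))\<close>, while \<open>f_alpha \<alpha> s \<le> s powr (1/2 + \<alpha>)\<close>
  for small \<open>s\<close>; as \<open>q < 1/2 + \<alpha>\<close>, the product tends to \<open>0\<close>.\<close>

lemma realpow_powr:
  fixes x q :: real
  assumes "x > 0"
  shows "(x ^ m) powr q = (x powr q) ^ m"
  using assms by (induction m) (simp_all add: powr_mult)

section \<open>Dyadic chaining for orthogonal sequences\<close>

text \<open>Rademacher--Menshov chaining: \<open>dyadic_max X l a\<close> dominates all partial sums of length at
  most \<open>2^l\<close> starting at \<open>a\<close>, yet for orthogonal summands its second moment exceeds that of the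
  whole block only by the factor \<open>(l+1)^2\<close>.\<close>
primrec dyadic_max :: "(nat \<Rightarrow> 'a \<Rightarrow> real) \<Rightarrow> nat \<Rightarrow> nat \<Rightarrow> 'a \<Rightarrow> real" where
  "dyadic_max X 0 a \<omega> = \<bar>X a \<omega>\<bar>"
| "dyadic_max X (Suc l) a \<omega> =
     \<bar>\<Sum>k\<in>{a..<a+2^l}. X k \<omega>\<bar> + max (dyadic_max X l a \<omega>) (dyadic_max X l (a+2^l) \<omega>)"

lemma dyadic_max_nonneg: "0 \<le> dyadic_max X l a \<omega>"
  by (induction l arbitrary: a) (fastforce simp: le_max_iff_disj)+

lemma abs_sum_le_dyadic_max:
  assumes "i \<le> 2^l"
  shows "\<bar>\<Sum>k\<in>{a..<a+i}. X k \<omega>\<bar> \<le> dyadic_max X l a \<omega>"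
  using assms
proof (induction l arbitrary: a i)
  case 0
  then have "i = 0 \<or> i = 1" by auto
  then show ?case by auto
next
  case (Suc l)
  show ?case
  proof (cases "i \<le> 2^l")
    case True
    then show ?thesis using Suc.IH[of i a] by auto
  next
    case False
    define j where "j = i - 2^l"
    have j: "j \<le> 2^l" "i = 2^l + j" using False Suc.prems by (auto simp: j_def)
    have "(\<Sum>k\<in>{a..<a+i}. X k \<omega>) = (\<Sum>k\<in>{a..<a+2^l}. X k \<omega>) + (\<Sum>k\<in>{a+2^l..<a+2^l+j}. X k \<omega>)"
      using j by (simp add: sum.atLeastLessThan_concat add.assoc)
    moreover have "\<bar>\<Sum>k\<in>{a+2^l..<a+2^l+j}. X k \<omega>\<bar> \<le> dyadic_max X l (a+2^l) \<omega>"
      using Suc.IH j(1) by blast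
    ultimately show ?thesis by auto
  qed
qed

lemma dyadic_max_measurable [measurable]:
  assumes [measurable]: "\<And>k. X k \<in> borel_measurable M"
  shows "dyadic_max X l a \<in> borel_measurable M"
proof (induction l arbitrary: a)
  case 0
  have "dyadic_max X 0 a = (\<lambda>\<omega>. \<bar>X a \<omega>\<bar>)" by (rule ext) simp
  then show ?case by simp
next
  case (Suc l)
  note [measurable] = Suc
  have "dyadic_max X (Suc l) a = (\<lambda>\<omega>. \<bar>\<Sum>k\<in>{a..<a+2^l}. X k \<omega>\<bar> +
      max (dyadic_max X l a \<omega>) (dyadic_max X l (a+2^l) \<omega>))"
    by (rule ext) simp
  then show ?case by simp
qed

lemma abs_partial_sum_le_of_dyadic_max:
  fixes X :: "nat \<Rightarrow> 'a \<Rightarrow> real"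
  assumes q: "q > 0" and eventually_less: "\<forall>m\<ge>m0. dyadic_max X m 0 \<omega> < (2 powr q)^m"
    and "n \<ge> 1" "j \<le> n"
  shows "\<bar>\<Sum>k<j. X k \<omega>\<bar> \<le> dyadic_max X m0 0 \<omega> + 2 powr q * real n powr q"
proof -
  have bound: "\<bar>\<Sum>k<j. X k \<omega>\<bar> \<le> dyadic_max X m 0 \<omega>" if "n \<le> 2^m" for m
    using abs_sum_le_dyadic_max[where i=j and l=m and a=0] that \<open>j \<le> n\<close> by (simp add: atLeast0LessThan)
  define m where "m = (LEAST m. n \<le> 2^m)"
  have nm: "n \<le> 2^m"
    unfolding m_def by (rule LeastI_ex) (meson less_exp less_imp_le)
  show ?thesis
  proof (cases "m \<le> m0")
    case True
    then have "(2::nat)^m \<le> 2^m0" by (rule power_increasing) simp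
    then have "n \<le> 2^m0" using nm by linarith
    moreover have "0 \<le> 2 powr q * real n powr q" by simp
    ultimately show ?thesis using bound[of m0] by linarith
  next
    case False
    then obtain m' where m': "m = Suc m'" by (cases m) auto
    have "\<not> n \<le> 2^m'" unfolding m_def by (rule not_less_Least) (simp add: m_def[symmetric] m')
    then have "real (2^m') \<le> real n" by simp
    have "dyadic_max X m 0 \<omega> < (2 powr q)^m" using eventually_less False by simp
    then have "\<bar>\<Sum>k<j. X k \<omega>\<bar> < (2 powr q)^m" using bound[OF nm] by linarith
    also have "(2 powr q)^m = 2 powr q * real (2^m') powr q"
      by (simp add: m' realpow_powr)
    also have "\<dots> \<le> 2 powr q * real n powr q"
      using \<open>real (2^m') \<le> real n\<close> q by (intro mult_left_mono powr_mono2) auto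
    finally show ?thesis using dyadic_max_nonneg[of X m0 0 \<omega>] by linarith
  qed
qed

lemma power2_add_le_weighted:
  fixes d z t :: real
  assumes "t > 0"
  shows "(d + z)^2 \<le> (1 + t) * d^2 + (1 + 1/t) * z^2"
proof -
  have "(1 + t) * d^2 + (1 + 1/t) * z^2 - (d + z)^2 = (t * d - z)^2 / t"
    using assms by (simp add: field_simps power2_eq_square)
  then show ?thesis using assms by (metis diff_ge_0_iff_ge divide_nonneg_pos zero_le_power2)
qed

lemma dyadic_max_Suc_square_le:
  fixes t :: real
  assumes t: "t > 0"
  shows "(dyadic_max X (Suc l) a \<omega>)^2 \<le> (1 + t) * (\<Sum>k\<in>{a..<a+2^l}. X k \<omega>)^2
           + (1 + 1/t) * ((dyadic_max X l a \<omega>)^2 + (dyadic_max X l (a+2^l) \<omega>)^2)"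
proof -
  let ?D = "\<Sum>k\<in>{a..<a+2^l}. X k \<omega>" and ?L = "dyadic_max X l a \<omega>" and ?R = "dyadic_max X l (a+2^l) \<omega>"
  have "(max ?L ?R)^2 \<le> ?L^2 + ?R^2"
    using dyadic_max_nonneg[of X l a \<omega>] dyadic_max_nonneg[of X l "a+2^l" \<omega>] by (simp add: max_def)
  then have "(1 + 1/t) * (max ?L ?R)^2 \<le> (1 + 1/t) * (?L^2 + ?R^2)"
    using t by (intro mult_left_mono) auto
  moreover have "(\<bar>?D\<bar> + max ?L ?R)^2 \<le> (1 + t) * \<bar>?D\<bar>^2 + (1 + 1/t) * (max ?L ?R)^2"
    by (rule power2_add_le_weighted[OF t])
  ultimately show ?thesis by simp
qed

locale orthogonal_family = prob_space +
  fixes X :: "nat \<Rightarrow> 'a \<Rightarrow> real" and v :: "nat \<Rightarrow> real"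
  assumes measurable_X [measurable]: "X k \<in> borel_measurable M"
    and integrable_mult: "integrable M (\<lambda>\<omega>. X i \<omega> * X j \<omega>)"
    and integral_mult: "(\<integral>\<omega>. X i \<omega> * X j \<omega> \<partial>M) = (if i = j then v i else 0)"
begin

lemma variance_nonneg: "0 \<le> v k"
  using integral_mult[of k k] integral_nonneg_AE[of "\<lambda>\<omega>. X k \<omega> * X k \<omega>" M] by simp

lemma sum_square_eq_double_sum: "(\<Sum>k\<in>A. X k \<omega>)^2 = (\<Sum>i\<in>A. \<Sum>j\<in>A. X i \<omega> * X j \<omega>)"
  by (simp only: power2_eq_square sum_product)

lemma integrable_sum_square: "integrable M (\<lambda>\<omega>. (\<Sum>k\<in>A. X k \<omega>)^2)"
  unfolding sum_square_eq_double_sum using integrable_mult by simp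

lemma integral_sum_square:
  assumes "finite A"
  shows "(\<integral>\<omega>. (\<Sum>k\<in>A. X k \<omega>)^2 \<partial>M) = (\<Sum>k\<in>A. v k)"
  unfolding sum_square_eq_double_sum
  using assms integrable_mult by (simp add: integral_mult sum.delta)

lemma dyadic_max_second_moment:
  "integrable M (\<lambda>\<omega>. (dyadic_max X l a \<omega>)^2) \<and>
   (\<integral>\<omega>. (dyadic_max X l a \<omega>)^2 \<partial>M) \<le> (real l + 1)^2 * (\<Sum>k\<in>{a..<a+2^l}. v k)"
proof (induction l arbitrary: a)
  case 0
  show ?case using integrable_mult[of a a] integral_mult[of a a] by (simp add: power2_eq_square)
next
  case (Suc l)
  \<comment> \<open>With this \<open>t\<close>, \<open>(1 + t) + (1 + 1/t) * t^2 = (t + 1)^2\<close>, so the induction closes.\<close>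
  define t where "t = real l + 1"
  have t: "t > 0" by (simp add: t_def)
  define D where "D \<omega> = (\<Sum>k\<in>{a..<a+2^l}. X k \<omega>)" for \<omega>
  let ?L = "\<lambda>\<omega>. dyadic_max X l a \<omega>" and ?R = "\<lambda>\<omega>. dyadic_max X l (a+2^l) \<omega>"
  define B where "B \<omega> = (1 + t) * (D \<omega>)^2 + (1 + 1/t) * ((?L \<omega>)^2 + (?R \<omega>)^2)" for \<omega>
  define V1 V2 where "V1 = (\<Sum>k\<in>{a..<a+2^l}. v k)" and "V2 = (\<Sum>k\<in>{a+2^l..<a+2^l+2^l}. v k)"
  have L: "integrable M (\<lambda>\<omega>. (?L \<omega>)^2)" "(\<integral>\<omega>. (?L \<omega>)^2 \<partial>M) \<le> t^2 * V1"
    and R: "integrable M (\<lambda>\<omega>. (?R \<omega>)^2)" "(\<integral>\<omega>. (?R \<omega>)^2 \<partial>M) \<le> t^2 * V2"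
    using Suc.IH[of a] Suc.IH[of "a+2^l"] by (auto simp: t_def V1_def V2_def)
  have D: "integrable M (\<lambda>\<omega>. (D \<omega>)^2)" "(\<integral>\<omega>. (D \<omega>)^2 \<partial>M) = V1"
    unfolding D_def V1_def by (simp_all add: integrable_sum_square integral_sum_square)
  have B_integrable: "integrable M B" unfolding B_def using D L R by simp
  have dominated: "(dyadic_max X (Suc l) a \<omega>)^2 \<le> B \<omega>" for \<omega>
    unfolding B_def D_def by (rule dyadic_max_Suc_square_le[OF t])
  have integrable: "integrable M (\<lambda>\<omega>. (dyadic_max X (Suc l) a \<omega>)^2)"
    by (rule Bochner_Integration.integrable_bound[OF B_integrable])
      (use dominated in \<open>auto intro!: AE_I2 order_trans[OF _ abs_ge_self]\<close>)
  have "(\<integral>\<omega>. (dyadic_max X (Suc l) a \<omega>)^2 \<partial>M) \<le> (\<integral>\<omega>. B \<omega> \<partial>M)"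
    by (rule integral_mono[OF integrable B_integrable dominated])
  also have "\<dots> \<le> (1 + t) * V1 + (1 + 1/t) * (t^2 * V1 + t^2 * V2)"
    unfolding B_def using D L R t by (simp add: add_mono mult_left_mono)
  also have "\<dots> = (t + 1) * ((t + 1) * V1 + t * V2)"
    using t by (simp add: field_simps power2_eq_square)
  also have "\<dots> \<le> (t + 1)^2 * (V1 + V2)"
    using t variance_nonneg by (simp add: V2_def sum_nonneg power2_eq_square algebra_simps)
  also have "V1 + V2 = (\<Sum>k\<in>{a..<a+2^Suc l}. v k)"
    by (simp add: V1_def V2_def sum.atLeastLessThan_concat add.assoc mult_2)
  finally show ?case using integrable by (simp add: t_def add.commute)
qed

lemma AE_eventually_dyadic_max_less:
  assumes c: "c > 0"
    and summable: "summable (\<lambda>m. (real m + 1)^2 * (\<Sum>k<2^m. v k) / (c^m)^2)"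
  shows "AE \<omega> in M. eventually (\<lambda>m. dyadic_max X m 0 \<omega> < c^m) sequentially"
proof -
  define A where "A m = {\<omega>\<in>space M. (c^m)^2 \<le> (dyadic_max X m 0 \<omega>)^2}" for m
  have [measurable]: "A m \<in> sets M" for m unfolding A_def by measurable
  have "measure M (A m) \<le> (real m + 1)^2 * (\<Sum>k<2^m. v k) / (c^m)^2" for m
  proof -
    note moment = dyadic_max_second_moment[of m 0]
    have "measure M (A m) \<le> (\<integral>\<omega>. (dyadic_max X m 0 \<omega>)^2 \<partial>M) / (c^m)^2"
      unfolding A_def using c moment by (intro integral_Markov_inequality_measure[where A="space M"]) auto
    also have "\<dots> \<le> (real m + 1)^2 * (\<Sum>k<2^m. v k) / (c^m)^2"
      using moment c by (intro divide_right_mono) (auto simp: atLeast0LessThan)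
    finally show ?thesis .
  qed
  then have "summable (\<lambda>m. measure M (A m))"
    by (intro summable_comparison_test'[OF summable, of 0]) auto
  then have "AE \<omega> in M. eventually (\<lambda>m. \<omega> \<in> space M - A m) sequentially"
    by (intro borel_cantelli_AE1) (auto simp: emeasure_eq_measure)
  then show ?thesis
  proof (rule AE_mp, intro AE_I2 impI)
    fix \<omega> assume "\<omega> \<in> space M" "eventually (\<lambda>m. \<omega> \<in> space M - A m) sequentially"
    then show "eventually (\<lambda>m. dyadic_max X m 0 \<omega> < c^m) sequentially"
      using c dyadic_max_nonneg[of X _ 0 \<omega>]
      by (elim eventually_mono) (auto simp: A_def intro: power_less_imp_less_base)
  qed
qed

lemma AE_partial_sums_powr_bounded:
  assumes q: "q > 0"
    and summable: "summable (\<lambda>m. (real m + 1)^2 * (\<Sum>k<2^m. v k) / ((2 powr q)^m)^2)"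
  shows "AE \<omega> in M. \<exists>K. \<forall>n j. 1 \<le> n \<longrightarrow> j \<le> n \<longrightarrow>
           \<bar>\<Sum>k<j. X k \<omega>\<bar> \<le> K + 2 powr q * real n powr q"
proof -
  have "AE \<omega> in M. eventually (\<lambda>m. dyadic_max X m 0 \<omega> < (2 powr q)^m) sequentially"
    by (rule AE_eventually_dyadic_max_less[OF _ summable]) simp
  then show ?thesis
  proof (rule AE_mp, intro AE_I2 impI)
    fix \<omega> assume "eventually (\<lambda>m. dyadic_max X m 0 \<omega> < (2 powr q)^m) sequentially"
    then obtain m0 where m0: "\<forall>m\<ge>m0. dyadic_max X m 0 \<omega> < (2 powr q)^m"
      by (auto simp: eventually_sequentially)
    then show "\<exists>K. \<forall>n j. 1 \<le> n \<longrightarrow> j \<le> n \<longrightarrow> \<bar>\<Sum>k<j. X k \<omega>\<bar> \<le> K + 2 powr q * real n powr q"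
      using abs_partial_sum_le_of_dyadic_max[OF q m0] by auto
  qed
qed

end

section \<open>The logarithmic weights\<close>

lemma ln_powr_le_const_mult_powr:
  fixes a q :: real
  assumes q: "q > 0"
  shows "\<exists>A>0. \<forall>x\<ge>2. ln x powr a \<le> A * x powr q"
proof (cases "a \<le> 0")
  case True
  show ?thesis
  proof (intro exI[of _ "ln 2 powr a"] conjI allI impI)
    fix x :: real assume x: "x \<ge> 2"
    have "ln x powr a \<le> ln 2 powr a"
      using True x by (intro powr_mono2') auto
    also have "\<dots> \<le> ln 2 powr a * x powr q"
      using x q by (simp add: ge_one_powr_ge_zero)
    finally show "ln x powr a \<le> ln 2 powr a * x powr q" .
  qed simp
next
  case False
  define \<beta> where "\<beta> = q / a"
  have \<beta>: "\<beta> > 0" using False q by (simp add: \<beta>_def)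
  show ?thesis
  proof (intro exI[of _ "\<beta> powr (- a)"] conjI allI impI)
    fix x :: real assume x: "x \<ge> 2"
    have "ln x = ln (x powr \<beta>) / \<beta>" using \<beta> x by (simp add: ln_powr)
    also have "\<dots> \<le> x powr \<beta> / \<beta>" using \<beta> x by (intro divide_right_mono ln_bound) auto
    finally have "ln x powr a \<le> (x powr \<beta> / \<beta>) powr a"
      using False x by (intro powr_mono2) auto
    also have "\<dots> = (x powr \<beta>) powr a / \<beta> powr a" using \<beta> x by (simp add: powr_divide)
    also have "(x powr \<beta>) powr a = x powr q" using False by (simp add: powr_powr \<beta>_def)
    also have "x powr q / \<beta> powr a = \<beta> powr (- a) * x powr q" by (simp add: powr_minus_divide)
    finally show "ln x powr a \<le> \<beta> powr (- a) * x powr q" .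
  qed (use \<beta> in simp)
qed

lemma harm_le_ln_plus_one:
  assumes "n \<ge> 1"
  shows "harm n \<le> ln (real n) + (1 :: real)"
proof -
  obtain m where n: "n = Suc m" using assms by (cases n) auto
  have "(harm (Suc m) :: real) - ln (real (Suc m)) \<le> harm (Suc 0) - ln (real (Suc 0))"
    using decseqD[OF decseq_harm_diff_ln, of 0 m] by simp
  then show ?thesis by (simp add: n harm_def)
qed

lemma summable_cube_div_power:
  fixes c :: real
  assumes c: "c > 1"
  shows "summable (\<lambda>m. (real m + 1)^3 / c^m)"
proof -
  define d where "d = sqrt c"
  have d: "d > 1" and c_eq: "c = d * d" using c by (auto simp: d_def)
  have "(\<lambda>m. (real m + 1)^3 / d^m) \<longlonglongrightarrow> 0" using d by real_asymp
  then have "eventually (\<lambda>m. (real m + 1)^3 / d^m < 1) sequentially"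
    by (rule order_tendstoD) simp
  then have "eventually (\<lambda>m. norm ((real m + 1)^3 / c^m) \<le> (1/d)^m) sequentially"
  proof (rule eventually_mono)
    fix m assume "(real m + 1)^3 / d^m < 1"
    then have "(real m + 1)^3 / d^m * (1/d)^m \<le> (1/d)^m"
      using d by (intro mult_left_le_one_le) auto
    then show "norm ((real m + 1)^3 / c^m) \<le> (1/d)^m"
      using d by (simp add: c_eq power_mult_distrib power_divide)
  qed
  then show ?thesis
    by (rule summable_comparison_test_ev) (use d in \<open>simp add: summable_geometric\<close>)
qed

text \<open>The weights of the theorem, vanishing below 2 so that the sums may run over \<open>{..<n}\<close>.\<close>
definition log_weight :: "real \<Rightarrow> nat \<Rightarrow> real" where
  "log_weight \<alpha> k = (if 2 \<le> k then ln (real k) powr \<alpha> / sqrt (real k) else 0)"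

lemma sum_inverse_lessThan_le_harm: "(\<Sum>k<n. inverse (real k)) \<le> harm n"
proof -
  have "(\<Sum>k<n. inverse (real k)) \<le> (\<Sum>k\<le>n. inverse (real k))"
    by (rule sum_mono2) auto
  also have "\<dots> = harm n"
    by (simp add: harm_def atMost_atLeast0 sum.atLeast_Suc_atMost)
  finally show ?thesis .
qed

lemma sum_inverse_lessThan_two_power_le: "(\<Sum>k<2^m. inverse (real k)) \<le> real m + 1"
proof -
  have "(\<Sum>k<2^m. inverse (real k)) \<le> ln (real (2^m)) + 1"
    by (rule order_trans[OF sum_inverse_lessThan_le_harm harm_le_ln_plus_one]) simp
  also have "ln (real (2^m)) = real m * ln 2" by (simp add: ln_realpow)
  also have "\<dots> \<le> real m" using ln_2_less_1 by (simp add: mult_left_le)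
  finally show ?thesis by simp
qed

lemma sum_log_weight_square_le:
  assumes q: "q > 0"
  shows "\<exists>A>0. \<forall>m. (\<Sum>k<2^m. (log_weight \<alpha> k)^2) \<le> A * (2 powr q)^m * (real m + 1)"
proof -
  obtain A where A: "A > 0" "\<forall>x\<ge>2. ln x powr (2 * \<alpha>) \<le> A * x powr q"
    using ln_powr_le_const_mult_powr[OF q] by blast
  define c where "c = 2 powr q"
  have c: "c > 1" using q by (simp add: c_def)
  have pointwise: "(log_weight \<alpha> k)^2 \<le> A * c^m * inverse (real k)" if "k < 2^m" for k m
  proof (cases "2 \<le> k")
    case True
    have "real k powr q \<le> real (2^m) powr q"
      using that q by (intro powr_mono2) auto
    also have "real (2^m) powr q = c^m"
      by (simp add: c_def realpow_powr)
    finally have k_powr: "real k powr q \<le> c^m" .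
    have "(log_weight \<alpha> k)^2 = (ln (real k) powr \<alpha>)^2 / (sqrt (real k))^2"
      using True by (simp only: log_weight_def if_True power_divide)
    also have "\<dots> = ln (real k) powr (2 * \<alpha>) / real k"
      using True by (subst powr_power) auto
    also have "\<dots> \<le> A * real k powr q / real k"
      using A(2) True by (intro divide_right_mono) auto
    also have "\<dots> \<le> A * c^m / real k"
      using k_powr A(1) by (intro divide_right_mono mult_left_mono) auto
    finally show ?thesis by (simp add: divide_inverse)
  qed (use A c in \<open>simp add: log_weight_def\<close>)
  have "(\<Sum>k<2^m. (log_weight \<alpha> k)^2) \<le> A * c^m * (real m + 1)" for m
  proof -
    have "(\<Sum>k<2^m. (log_weight \<alpha> k)^2) \<le> A * c^m * (\<Sum>k<2^m. inverse (real k))"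
      unfolding sum_distrib_left using pointwise by (intro sum_mono) simp
    also have "\<dots> \<le> A * c^m * (real m + 1)"
      using sum_inverse_lessThan_two_power_le A c by (intro mult_left_mono) auto
    finally show ?thesis .
  qed
  then show ?thesis using A(1) unfolding c_def by blast
qed

lemma summable_dyadic_log_weight_moments:
  assumes q: "q > 0"
  shows "summable (\<lambda>m. (real m + 1)^2 * (\<Sum>k<2^m. (log_weight \<alpha> k)^2) / ((2 powr q)^m)^2)"
proof -
  obtain A where A: "A > 0" "\<And>m. (\<Sum>k<2^m. (log_weight \<alpha> k)^2) \<le> A * (2 powr q)^m * (real m + 1)"
    using sum_log_weight_square_le[OF q] by blast
  define c where "c = 2 powr q"
  have c: "c > 1" using q by (simp add: c_def)
  show ?thesis
  proof (rule summable_comparison_test'[where N=0])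
    show "summable (\<lambda>m. A * ((real m + 1)^3 / c^m))"
      by (intro summable_mult summable_cube_div_power c)
    fix m :: nat
    have "(real m + 1)^2 * (\<Sum>k<2^m. (log_weight \<alpha> k)^2) / (c^m)^2
        \<le> (real m + 1)^2 * (A * c^m * (real m + 1)) / (c^m)^2"
      using A(2)[of m, folded c_def] c by (intro divide_right_mono mult_left_mono) auto
    also have "\<dots> = A * ((real m + 1)^3 / c^m)"
      using c by (simp add: power2_eq_square power3_eq_cube field_simps)
    finally show "norm ((real m + 1)^2 * (\<Sum>k<2^m. (log_weight \<alpha> k)^2) / ((2 powr q)^m)^2)
        \<le> A * ((real m + 1)^3 / c^m)"
      by (simp add: c_def sum_nonneg)
  qed
qed

section \<open>Summation by parts against \<open>k powr (-s)\<close>\<close>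

lemma abs_sum_mult_antimono_le:
  fixes b x :: "nat \<Rightarrow> real"
  assumes nonneg: "\<And>k. 0 \<le> b k" and antimono: "\<And>k. b (Suc k) \<le> b k"
    and partial_sums: "\<And>j. j \<le> n \<Longrightarrow> \<bar>\<Sum>k<j. x k\<bar> \<le> K"
  shows "\<bar>\<Sum>k<n. b k * x k\<bar> \<le> b 0 * K"
proof -
  define S where "S j = (\<Sum>k<j. x k)" for j
  have S: "\<bar>S j\<bar> \<le> K" if "j \<le> n" for j using partial_sums[OF that] by (simp add: S_def)
  have summation_by_parts: "(\<Sum>k<n. b k * x k) = b n * S n + (\<Sum>k<n. (b k - b (Suc k)) * S (Suc k))"
    by (induction n) (simp_all add: S_def algebra_simps)
  have "\<bar>\<Sum>k<n. (b k - b (Suc k)) * S (Suc k)\<bar> \<le> (\<Sum>k<n. (b k - b (Suc k)) * K)"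
  proof -
    have "\<bar>\<Sum>k<n. (b k - b (Suc k)) * S (Suc k)\<bar> \<le> (\<Sum>k<n. \<bar>b k - b (Suc k)\<bar> * \<bar>S (Suc k)\<bar>)"
      by (simp add: abs_mult[symmetric] sum_abs)
    also have "\<dots> \<le> (\<Sum>k<n. (b k - b (Suc k)) * K)"
      using antimono S by (intro sum_mono mult_mono) auto
    finally show ?thesis .
  qed
  moreover have "(\<Sum>k<n. (b k - b (Suc k)) * K) = (b 0 - b n) * K"
    by (simp add: sum_distrib_right[symmetric] sum_lessThan_telescope')
  moreover have "\<bar>b n * S n\<bar> \<le> b n * K"
    using S[of n] nonneg[of n] by (simp add: abs_mult mult_left_mono)
  ultimately show ?thesis unfolding summation_by_parts by (simp add: algebra_simps)
qed

lemma abs_sum_log_weight_powr_le: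
  fixes y :: "nat \<Rightarrow> real"
  assumes s: "0 < s" "s < 1" and q: "q > 0" and C: "C \<ge> 0"
    and partial_sums: "\<And>n j. 1 \<le> n \<Longrightarrow> j \<le> n \<Longrightarrow> \<bar>\<Sum>k<j. log_weight \<alpha> k * y k\<bar> \<le> K + C * real n powr q"
  shows "\<bar>\<Sum>k = 2..Mfl s. ln (real k) powr \<alpha> / real k powr (1/2 + s) * y k\<bar>
           \<le> K + C * 2 powr q * s powr (- q)"
proof -
  define N where "N = Mfl s"
  define b where "b k = real (max 1 k) powr (- s)" for k
  have "(\<Sum>k = 2..N. ln (real k) powr \<alpha> / real k powr (1/2 + s) * y k)
      = (\<Sum>k<N+1. b k * (log_weight \<alpha> k * y k))"
  proof (rule sum.mono_neutral_cong_left)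
    show "\<forall>k\<in>{..<N+1} - {2..N}. b k * (log_weight \<alpha> k * y k) = 0"
      by (auto simp: log_weight_def)
    fix k assume "k \<in> {2..N}"
    then have k: "2 \<le> k" by simp
    then have "real k powr (1/2 + s) = sqrt (real k) * real k powr s"
      by (simp add: powr_add powr_half_sqrt)
    moreover have "b k = 1 / real k powr s"
      using k by (simp add: b_def powr_minus_divide max_def)
    ultimately show "ln (real k) powr \<alpha> / real k powr (1/2 + s) * y k = b k * (log_weight \<alpha> k * y k)"
      using k by (simp add: log_weight_def)
  qed auto
  also have "\<bar>\<Sum>k<N+1. b k * (log_weight \<alpha> k * y k)\<bar> \<le> b 0 * (K + C * real (N+1) powr q)"
  proof (rule abs_sum_mult_antimono_le)
    show "b (Suc k) \<le> b k" for k
      unfolding b_def using s by (intro powr_mono2') auto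
    show "\<bar>\<Sum>k<j. log_weight \<alpha> k * y k\<bar> \<le> K + C * real (N+1) powr q" if "j \<le> N + 1" for j
      using partial_sums[of "N+1" j] that by simp
  qed (simp add: b_def)
  also have "real (N+1) \<le> 2 / s"
  proof -
    have "real N \<le> 1 / s" unfolding N_def Mfl_def using s by simp
    moreover have "1 \<le> 1 / s" using s by simp
    ultimately show ?thesis by simp
  qed
  then have "b 0 * (K + C * real (N+1) powr q) \<le> K + C * (2 / s) powr q"
    using q C by (simp add: b_def mult_left_mono powr_mono2)
  also have "(2 / s) powr q = 2 powr q * s powr (- q)"
    using s by (simp add: powr_divide powr_minus_divide)
  finally show ?thesis by (simp add: N_def mult.assoc)
qed

lemma eventually_f_alpha_le_powr:
  assumes "\<alpha> > -1/2"
  shows "eventually (\<lambda>s. 0 \<le> f_alpha \<alpha> s \<and> f_alpha \<alpha> s \<le> s powr (1/2 + \<alpha>)) (at_right 0)"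
proof -
  have c_pos: "c_alpha \<alpha> > 0" unfolding c_alpha_def using assms by (simp add: Gamma_real_pos)
  have "filterlim (\<lambda>s::real. ln (ln (1/s))) at_top (at_right 0)" by real_asymp
  then have "eventually (\<lambda>s. 1 / c_alpha \<alpha> \<le> ln (ln (1/s))) (at_right 0)"
    by (simp add: filterlim_at_top)
  moreover have "eventually (\<lambda>s::real. 0 < s) (at_right 0)" by (rule eventually_at_right_less)
  ultimately show ?thesis
  proof eventually_elim
    case (elim s)
    define L where "L = c_alpha \<alpha> * ln (ln (1/s))"
    have L: "L \<ge> 1" using elim c_pos by (simp add: L_def field_simps)
    have "(s powr (1/2 + \<alpha>))^2 = s powr (1 + 2 * \<alpha>)"
      using elim by (subst powr_power) (simp_all add: algebra_simps)
    then have f_eq: "f_alpha \<alpha> s = sqrt ((s powr (1/2 + \<alpha>))^2 / L)"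
      by (simp add: f_alpha_def L_def)
    have "(s powr (1/2 + \<alpha>))^2 / L \<le> (s powr (1/2 + \<alpha>))^2 / 1"
      using L by (intro divide_left_mono) auto
    then have "f_alpha \<alpha> s \<le> sqrt ((s powr (1/2 + \<alpha>))^2)"
      unfolding f_eq by (intro real_sqrt_le_mono) simp
    then show ?case using L by (simp add: f_eq)
  qed
qed

lemma tendsto_f_alpha_mult_sum_zero:
  fixes y :: "nat \<Rightarrow> real"
  assumes \<alpha>: "\<alpha> > -1/2" and q: "0 < q" "q < 1/2 + \<alpha>" and C: "C \<ge> 0"
    and partial_sums: "\<And>n j. 1 \<le> n \<Longrightarrow> j \<le> n \<Longrightarrow> \<bar>\<Sum>k<j. log_weight \<alpha> k * y k\<bar> \<le> K + C * real n powr q"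
  shows "((\<lambda>s. f_alpha \<alpha> s * (\<Sum>k = 2..Mfl s. ln (real k) powr \<alpha> / real k powr (1/2 + s) * y k))
           \<longlongrightarrow> 0) (at_right 0)"
proof -
  define p where "p = 1/2 + \<alpha>"
  define g where "g s = K * s powr p + C * 2 powr q * s powr (p - q)" for s :: real
  have "eventually (\<lambda>s::real. s < 1) (at_right 0)"
    unfolding eventually_at_right_field by (intro exI[of _ 1]) auto
  with eventually_f_alpha_le_powr[OF \<alpha>] eventually_at_right_less[of 0]
  have "eventually (\<lambda>s. norm (f_alpha \<alpha> s *
          (\<Sum>k = 2..Mfl s. ln (real k) powr \<alpha> / real k powr (1/2 + s) * y k)) \<le> g s) (at_right 0)"
  proof eventually_elim
    case (elim s)
    let ?S = "\<Sum>k = 2..Mfl s. ln (real k) powr \<alpha> / real k powr (1/2 + s) * y k"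
    have "norm (f_alpha \<alpha> s * ?S) = f_alpha \<alpha> s * \<bar>?S\<bar>"
      using elim by (simp add: abs_mult)
    also have "\<dots> \<le> s powr p * (K + C * 2 powr q * s powr (- q))"
      using elim abs_sum_log_weight_powr_le[OF _ _ q(1) C partial_sums, of s]
      by (intro mult_mono) (auto simp: p_def)
    also have "\<dots> = K * s powr p + C * 2 powr q * (s powr p * s powr (- q))"
      by (simp add: algebra_simps)
    also have "s powr p * s powr (- q) = s powr (p - q)"
      by (simp add: powr_add[symmetric])
    also have "K * s powr p + C * 2 powr q * s powr (p - q) = g s"
      by (simp add: g_def)
    finally show ?case .
  qed
  moreover have "(g \<longlongrightarrow> 0) (at_right 0)"
  proof -
    have nonneg: "eventually (\<lambda>s::real. 0 \<le> s) (at_right 0)"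
      using eventually_at_right_less[of "0::real"] by (rule eventually_mono) simp
    have "((\<lambda>s::real. s powr e) \<longlongrightarrow> 0) (at_right 0)" if "e > 0" for e
      by (rule tendsto_zero_powrI[OF tendsto_ident_at tendsto_const nonneg that])
    then show ?thesis
      unfolding g_def using q
      by (auto simp: p_def intro!: tendsto_add_zero tendsto_mult_right_zero)
  qed
  ultimately show ?thesis by (rule Lim_null_comparison)
qed

section \<open>Independent identically distributed sequences\<close>

lemma integral_comp_eq_of_distr_eq:
  fixes X Y :: "'a \<Rightarrow> real" and g :: "real \<Rightarrow> real"
  assumes [measurable]: "X \<in> borel_measurable M" "Y \<in> borel_measurable M" "g \<in> borel_measurable borel"
    and distr: "distr M borel X = distr M borel Y"
  shows "integrable M (\<lambda>x. g (X x)) \<longleftrightarrow> integrable M (\<lambda>x. g (Y x))"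
    and "(\<integral>x. g (X x) \<partial>M) = (\<integral>x. g (Y x) \<partial>M)"
  using integrable_distr_eq[where g = X and M = M and N = borel and f = g]
    integrable_distr_eq[where g = Y and M = M and N = borel and f = g]
    integral_distr[where g = X and M = M and N = borel and f = g]
    integral_distr[where g = Y and M = M and N = borel and f = g] distr
  by simp_all

lemma (in prob_space) iid_orthonormal:
  fixes \<eta> :: "nat \<Rightarrow> 'a \<Rightarrow> real"
  assumes [measurable]: "\<And>k. \<eta> k \<in> borel_measurable M"
    and indep: "indep_vars (\<lambda>_. borel) \<eta> UNIV"
    and distr: "\<And>k. distr M borel (\<eta> k) = distr M borel (\<eta> 1)"
    and "integrable M (\<eta> 1)" "integrable M (\<lambda>x. (\<eta> 1 x)\<^sup>2)"
    and "expectation (\<eta> 1) = 0" "expectation (\<lambda>x. (\<eta> 1 x)\<^sup>2) = 1"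
  shows "integrable M (\<lambda>x. \<eta> i x * \<eta> j x) \<and> (\<integral>x. \<eta> i x * \<eta> j x \<partial>M) = (if i = j then 1 else 0)"
proof -
  have same_law: "integrable M (\<lambda>x. g (\<eta> k x)) \<longleftrightarrow> integrable M (\<lambda>x. g (\<eta> 1 x))"
    "(\<integral>x. g (\<eta> k x) \<partial>M) = (\<integral>x. g (\<eta> 1 x) \<partial>M)" if "g \<in> borel_measurable borel" for g :: "real \<Rightarrow> real" and k
    using integral_comp_eq_of_distr_eq[where X = "\<eta> k" and Y = "\<eta> 1" and M = M and g = g]
      assms(1) that distr[of k] by simp_all
  have "integrable M (\<eta> k)" "expectation (\<eta> k) = 0" for k
    using same_law[of "\<lambda>x. x" k] assms(4,6) by simp_all
  moreover have "integrable M (\<lambda>x. \<eta> k x * \<eta> k x)" "expectation (\<lambda>x. \<eta> k x * \<eta> k x) = 1" for k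
    using same_law[of "\<lambda>x. x^2" k] assms(5,7) by (simp_all add: power2_eq_square)
  moreover have "integrable M (\<lambda>x. \<Prod>k\<in>{i, j}. \<eta> k x)"
    and "expectation (\<lambda>x. \<Prod>k\<in>{i, j}. \<eta> k x) = (\<Prod>k\<in>{i, j}. expectation (\<eta> k))"
    if "i \<noteq> j"
    using indep_vars_subset[OF indep, of "{i, j}"] calculation(1)
    by (auto intro: indep_vars_integrable indep_vars_lebesgue_integral)
  ultimately show ?thesis by (cases "i = j") auto
qed

lemma (in prob_space) orthogonal_family_scaled:
  fixes Y :: "nat \<Rightarrow> 'a \<Rightarrow> real" and w :: "nat \<Rightarrow> real"
  assumes [measurable]: "\<And>k. Y k \<in> borel_measurable M"
    and orthonormal: "\<And>i j. integrable M (\<lambda>\<omega>. Y i \<omega> * Y j \<omega>) \<and>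
                         (\<integral>\<omega>. Y i \<omega> * Y j \<omega> \<partial>M) = (if i = j then 1 else 0)"
  shows "orthogonal_family M (\<lambda>k \<omega>. w k * Y k \<omega>) (\<lambda>k. (w k)^2)"
proof (rule orthogonal_family.intro[OF prob_space_axioms], unfold_locales)
  fix i j
  have "(\<lambda>\<omega>. w i * Y i \<omega> * (w j * Y j \<omega>)) = (\<lambda>\<omega>. (w i * w j) * (Y i \<omega> * Y j \<omega>))"
    by (simp add: fun_eq_iff mult_ac)
  then show "integrable M (\<lambda>\<omega>. w i * Y i \<omega> * (w j * Y j \<omega>))"
    and "(\<integral>\<omega>. w i * Y i \<omega> * (w j * Y j \<omega>) \<partial>M) = (if i = j then (w i)^2 else 0)"
    using orthonormal[of i j] by (simp_all add: power2_eq_square)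
qed simp

theorem lemma5p2:
  fixes M :: "'a measure" and \<eta> :: "nat \<Rightarrow> 'a \<Rightarrow> real" and \<alpha> :: real
  assumes "prob_space M"
    and "\<And>k. \<eta> k \<in> borel_measurable M"
    and "prob_space.indep_vars M (\<lambda>_. borel) \<eta> UNIV"
    and "\<And>k. distr M borel (\<eta> k) = distr M borel (\<eta> 1)"
    and "integrable M (\<eta> 1)"
    and "integrable M (\<lambda>x. (\<eta> 1 x)\<^sup>2)"
    and "prob_space.expectation M (\<eta> 1) = 0"
    and "prob_space.expectation M (\<lambda>x. (\<eta> 1 x)\<^sup>2) = 1"
    and "\<alpha> > - 1 / 2"
  shows "AE \<omega> in M. ((\<lambda>s. f_alpha \<alpha> s *
            (\<Sum>k = 2..Mfl s. (ln (real k)) powr \<alpha> / (real k) powr (1 / 2 + s) * \<eta> k \<omega>))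
           \<longlongrightarrow> 0) (at_right 0)"
proof -
  interpret prob_space M by fact
  interpret weighted: orthogonal_family M "\<lambda>k \<omega>. log_weight \<alpha> k * \<eta> k \<omega>" "\<lambda>k. (log_weight \<alpha> k)^2"
    by (rule orthogonal_family_scaled[OF assms(2) iid_orthonormal[OF assms(2-8)]])
  define q where "q = (1/2 + \<alpha>) / 2"
  have q: "0 < q" "q < 1/2 + \<alpha>" using assms(9) by (simp_all add: q_def)
  have "AE \<omega> in M. \<exists>K. \<forall>n j. 1 \<le> n \<longrightarrow> j \<le> n \<longrightarrow>
          \<bar>\<Sum>k<j. log_weight \<alpha> k * \<eta> k \<omega>\<bar> \<le> K + 2 powr q * real n powr q"
    by (rule weighted.AE_partial_sums_powr_bounded[OF q(1) summable_dyadic_log_weight_moments[OF q(1)]])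
  then show ?thesis
  proof (rule AE_mp, intro AE_I2 impI, elim exE)
    fix \<omega> K
    assume "\<forall>n j. 1 \<le> n \<longrightarrow> j \<le> n \<longrightarrow>
      \<bar>\<Sum>k<j. log_weight \<alpha> k * \<eta> k \<omega>\<bar> \<le> K + 2 powr q * real n powr q"
    then show "((\<lambda>s. f_alpha \<alpha> s *
        (\<Sum>k = 2..Mfl s. ln (real k) powr \<alpha> / real k powr (1 / 2 + s) * \<eta> k \<omega>)) \<longlongrightarrow> 0) (at_right 0)"
      by (intro tendsto_f_alpha_mult_sum_zero[OF assms(9) q, where C = "2 powr q" and K = K]) simp_all
  qed
qed

end
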